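(* Let $X$ be a Banach lattice and $1<p<\infty$, with $p^{\ast}$ defined by $1/p+1/p^{\ast}=1$. Then the Banach lattice $\ell_{p^{\ast},|\omega|}(X^{\ast})$ is lattice isomorphic and isometrically isomorphic to the dual $\left[\ell_{p}^{\pi}(X)\right]^{\ast}$ (via the map sending $(x_n^{\ast})_n$ to the functional $(x_n)_n\mapsto\sum_{n=1}^\infty x_n^{\ast}(x_n)$).
   Context: For a Banach lattice $X$, $X_+$ denotes its positive cone, $|x|=\sup\{x,-x\}$, and $X^{\ast}$ is the dual Banach lattice with order $x_1^{\ast}\le x_2^{\ast}$ iff $\langle x_1^{\ast},x\rangle\le\langle x_2^{\ast},x\rangle$ for all $x\in X_+$. For $1\le r<\infty$, $\ell_{r,|\omega|}(X^{\ast})$ is the space of sequences $(x_n^{\ast})_n$ in $X^{\ast}$ with $\sum_n\langle x,|x_n^{\ast}|\rangle^{r}<\infty$ for all $x\in X_+$, normed by $\|(x_n^{\ast})_n\|_{r,|\omega|}=\sup_{x\in B_X\cap X_+}(\sum_n\langle |x_n^{\ast}|,x\rangle^{r})^{1/r}$; it is a Banach lattice with the coordinatewise order. The space $\ell_p^{\pi}(X)$ (positive strongly $p$-summable sequences) consists of sequences $(x_n)_n$ in $X$ with $\sum_n|\langle x_n^{\ast},|x_n|\rangle|<\infty$ for every positive $(x_n^{\ast})_n\in\ell_{p^{\ast},|\omega|}(X^{\ast})$, with norm $\|(x_n)_n\|_{\ell_p^{\pi}(X)}=\sup\sum_{n}\langle x_n^{\ast},|x_n|\rangle$, the supremum over positive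 $(x_n^{\ast})_n$ in the closed unit ball of $\ell_{p^{\ast},|\omega|}(X^{\ast})$; it is a Banach lattice with coordinatewise order. *)

theory Defs
  imports "HOL-Analysis.Analysis"
begin

definition labs :: "'a::{lattice, uminus} \<Rightarrow> 'a" where
  "labs x = sup x (- x)"

class banach_lattice = banach + ordered_real_vector + lattice +
  assumes lattice_norm: "sup x (- x) \<le> sup y (- y) \<Longrightarrow> norm x \<le> norm y"

definition dual_le :: "('a::banach_lattice \<Rightarrow>\<^sub>L real) \<Rightarrow> ('a \<Rightarrow>\<^sub>L real) \<Rightarrow> bool" where
  "dual_le f g \<longleftrightarrow> (\<forall>x. 0 \<le> x \<longrightarrow> blinfun_apply f x \<le> blinfun_apply g x)"

definition dual_abs :: "('a::banach_lattice \<Rightarrow>\<^sub>L real) \<Rightarrow> ('a \<Rightarrow>\<^sub>L real)" where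
  "dual_abs f = (THE h. dual_le f h \<and> dual_le (- f) h \<and>
                   (\<forall>k. dual_le f k \<and> dual_le (- f) k \<longrightarrow> dual_le h k))"

definition in_lw :: "real \<Rightarrow> (nat \<Rightarrow> ('a::banach_lattice \<Rightarrow>\<^sub>L real)) \<Rightarrow> bool" where
  "in_lw r F \<longleftrightarrow> (\<forall>x. 0 \<le> x \<longrightarrow> summable (\<lambda>n. (blinfun_apply (dual_abs (F n)) x) powr r))"

definition lw_norm :: "real \<Rightarrow> (nat \<Rightarrow> ('a::banach_lattice \<Rightarrow>\<^sub>L real)) \<Rightarrow> real" where
  "lw_norm r F = (SUP x\<in>{x. 0 \<le> x \<and> norm x \<le> 1}.
                    (\<Sum>n. (blinfun_apply (dual_abs (F n)) x) powr r) powr (1 / r))"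

definition pos_seq :: "(nat \<Rightarrow> ('a::banach_lattice \<Rightarrow>\<^sub>L real)) \<Rightarrow> bool" where
  "pos_seq F \<longleftrightarrow> (\<forall>n. dual_le 0 (F n))"

text \<open>q is the conjugate exponent p* (given explicitly).\<close>

definition in_lpi :: "real \<Rightarrow> (nat \<Rightarrow> 'a::banach_lattice) \<Rightarrow> bool" where
  "in_lpi q xs \<longleftrightarrow> (\<forall>F. in_lw q F \<and> pos_seq F \<longrightarrow>
       summable (\<lambda>n. \<bar>blinfun_apply (F n) (labs (xs n))\<bar>))"

definition lpi_norm :: "real \<Rightarrow> (nat \<Rightarrow> 'a::banach_lattice) \<Rightarrow> real" where
  "lpi_norm q xs = (SUP F\<in>{F. in_lw q F \<and> pos_seq F \<and> lw_norm q F \<le> 1}.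
                      (\<Sum>n. blinfun_apply (F n) (labs (xs n))))"

text \<open>Bounded linear functionals on the subspace L = l_p^pi(X); two functionals
  are the same element of the dual when they agree on L.\<close>

definition linear_on_set :: "(nat \<Rightarrow> 'b::real_vector) set \<Rightarrow> ((nat \<Rightarrow> 'b) \<Rightarrow> real) \<Rightarrow> bool" where
  "linear_on_set L \<phi> \<longleftrightarrow> (\<forall>x\<in>L. \<forall>y\<in>L. \<phi> (\<lambda>n. x n + y n) = \<phi> x + \<phi> y) \<and>
                          (\<forall>x\<in>L. \<forall>c. \<phi> (\<lambda>n. c *\<^sub>R x n) = c * \<phi> x)"

definition lpi_dual :: "real \<Rightarrow> ((nat \<Rightarrow> 'a::banach_lattice) \<Rightarrow> real) \<Rightarrow> bool" where
  "lpi_dual q \<phi> \<longleftrightarrow> linear_on_set {xs. in_lpi q xs} \<phi> \<and>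
      (\<exists>C. \<forall>xs. in_lpi q xs \<longrightarrow> \<bar>\<phi> xs\<bar> \<le> C * lpi_norm q xs)"

definition lpi_dual_norm :: "real \<Rightarrow> ((nat \<Rightarrow> 'a::banach_lattice) \<Rightarrow> real) \<Rightarrow> real" where
  "lpi_dual_norm q \<phi> = (SUP xs\<in>{xs. in_lpi q xs \<and> lpi_norm q xs \<le> 1}. \<bar>\<phi> xs\<bar>)"

definition lpi_dual_le :: "real \<Rightarrow> ((nat \<Rightarrow> 'a::banach_lattice) \<Rightarrow> real) \<Rightarrow> ((nat \<Rightarrow> 'a) \<Rightarrow> real) \<Rightarrow> bool" where
  "lpi_dual_le q \<phi> \<psi> \<longleftrightarrow> (\<forall>xs. in_lpi q xs \<and> (\<forall>n. 0 \<le> xs n) \<longrightarrow> \<phi> xs \<le> \<psi> xs)"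

definition canon :: "(nat \<Rightarrow> ('a::banach_lattice \<Rightarrow>\<^sub>L real)) \<Rightarrow> (nat \<Rightarrow> 'a) \<Rightarrow> real" where
  "canon F xs = (\<Sum>n. blinfun_apply (F n) (xs n))"

end

theory Submission
  imports Defs "HOL-Library.Lattice_Algebras"
begin

(* The pairing of (x_n^* ) with (x_n) is dominated by sum_n |x_n^*|(|x_n|), and rescaling
   (|x_n^*|) into the positive unit ball of l_{p*,|w|}(X^* ) bounds this by the product of the
   two norms.  Conversely, a functional phi on l_p^pi(X) yields x_n^* = phi o (insertion at n).
   The Riesz-Kantorovich formula |f|(x) = sup {f z : |z| <= x}, combined with the equality case
   of Hoelder's inequality and tested on finitely supported sequences (a_n z_n) with |z_n| <= x,
   shows that (x_n^* ) lies in l_{p*,|w|}(X^* ) with norm at most ||phi||; the same test gives the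
   reverse norm inequality for the canonical map.  That phi is the series sum_n x_n^*(x_n)
   follows because the tails of every element of l_p^pi(X) are small in norm, which is a
   gliding hump argument; another gliding hump shows that the weak q-sums are bounded on the
   unit ball, so that the norm of l_{p*,|w|}(X^* ) is finite.  The order statements are
   checked on sequences with a single nonzero entry. *)

section \<open>Banach lattices\<close>

context banach_lattice begin
subclass lattice_ab_group_add ..
end

lemma le_labs: "(x::'a::banach_lattice) \<le> labs x" "- x \<le> labs x"
  by (auto simp: labs_def)

lemma labs_leI: "(z::'a::banach_lattice) \<le> x \<Longrightarrow> - z \<le> x \<Longrightarrow> labs z \<le> x"
  by (simp add: labs_def)

lemma labs_nonneg: "0 \<le> labs (x::'a::banach_lattice)"
proof -
  have "x + - x \<le> labs x + labs x" by (rule add_mono[OF le_labs])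
  then show ?thesis by simp
qed

lemma labs_eq_pprt_minus_nprt: "labs (x::'a::banach_lattice) = pprt x - nprt x"
proof -
  have "sup (sup x (- x)) 0 = sup x (- x)"
    using labs_nonneg[of x] by (simp add: labs_def sup_absorb1)
  then show ?thesis
    by (simp add: add_sup_inf_distribs ac_simps pprt_def nprt_def labs_def)
qed

lemma labs_of_nonneg: "0 \<le> (x::'a::banach_lattice) \<Longrightarrow> labs x = x"
  unfolding labs_def by (rule sup_absorb1) (meson neg_le_0_iff_le order_trans)

lemma labs_zero [simp]: "labs (0::'a::banach_lattice) = 0"
  by (simp add: labs_of_nonneg)

lemma norm_labs: "norm (labs (x::'a::banach_lattice)) = norm x"
  using lattice_norm[of x "labs x"] lattice_norm[of "labs x" x]
  by (metis labs_def labs_of_nonneg labs_nonneg order_refl antisym)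

lemma norm_mono_nonneg: "0 \<le> (y::'a::banach_lattice) \<Longrightarrow> y \<le> x \<Longrightarrow> norm y \<le> norm x"
  using lattice_norm[of y x] labs_of_nonneg[of y] labs_of_nonneg[of x]
  unfolding labs_def by simp

lemma norm_pprt_le: "norm (pprt (x::'a::banach_lattice)) \<le> norm x"
proof -
  have "pprt x \<le> labs x" by (simp add: labs_eq_pprt_minus_nprt)
  then show ?thesis by (metis norm_mono_nonneg norm_labs zero_le_pprt)
qed

lemma norm_nprt_le: "norm (nprt (x::'a::banach_lattice)) \<le> norm x"
proof -
  have "- nprt x \<le> labs x" by (simp add: labs_eq_pprt_minus_nprt)
  then show ?thesis by (metis norm_mono_nonneg norm_labs norm_minus_cancel neg_0_le_iff_le nprt_le_zero)
qed

lemma scaleR_sup_nonneg: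
  assumes "0 \<le> c" shows "c *\<^sub>R sup a b = sup (c *\<^sub>R a) (c *\<^sub>R (b::'a::banach_lattice))"
proof (cases "c = 0")
  case False
  with assms have c: "0 < c" by simp
  have "x \<le> (1/c) *\<^sub>R sup (c *\<^sub>R a) (c *\<^sub>R b)" if "x = a \<or> x = b" for x
  proof -
    have "x = (1/c) *\<^sub>R (c *\<^sub>R x)" using c by simp
    also have "\<dots> \<le> (1/c) *\<^sub>R sup (c *\<^sub>R a) (c *\<^sub>R b)"
      using c that by (intro scaleR_left_mono) auto
    finally show ?thesis .
  qed
  then have "c *\<^sub>R sup a b \<le> c *\<^sub>R ((1/c) *\<^sub>R sup (c *\<^sub>R a) (c *\<^sub>R b))"
    using c by (intro scaleR_left_mono) auto
  then have "c *\<^sub>R sup a b \<le> sup (c *\<^sub>R a) (c *\<^sub>R b)"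
    using c by simp
  moreover have "sup (c *\<^sub>R a) (c *\<^sub>R b) \<le> c *\<^sub>R sup a b"
    using assms by (auto intro: scaleR_left_mono)
  ultimately show ?thesis by (rule antisym)
qed simp

lemma labs_scaleR: "labs (c *\<^sub>R (x::'a::banach_lattice)) = \<bar>c\<bar> *\<^sub>R labs x"
proof (cases "0 \<le> c")
  case True
  then show ?thesis unfolding labs_def by (simp add: scaleR_sup_nonneg)
next
  case False
  have "labs (c *\<^sub>R x) = sup ((-c) *\<^sub>R (-x)) ((-c) *\<^sub>R x)"
    unfolding labs_def by (simp only: scaleR_minus_left scaleR_minus_right minus_minus)
  also have "\<dots> = (-c) *\<^sub>R sup (-x) x"
    by (rule scaleR_sup_nonneg[symmetric]) (use False in simp)
  finally show ?thesis
    using False by (simp only: labs_def sup_commute[of "-x" x] abs_of_neg not_le)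
qed

lemma riesz_decomposition:
  fixes x z y :: "'a::banach_lattice"
  assumes "0 \<le> x" "0 \<le> z" "0 \<le> y" "y \<le> x + z"
  obtains y1 y2 where "y = y1 + y2" "0 \<le> y1" "y1 \<le> x" "0 \<le> y2" "y2 \<le> z"
proof
  show "y = inf y x + (y - inf y x)" by (metis add.commute diff_add_cancel)
  show "0 \<le> inf y x" "inf y x \<le> x" using assms by auto
  show "0 \<le> y - inf y x" by (metis diff_ge_0_iff_ge inf.cobounded1)
  have "y - inf y x = sup (y + - y) (y + - x)"
    by (simp only: diff_inf_eq_sup add_sup_distrib_left)
  also have "\<dots> = sup 0 (y - x)" by simp
  also have "\<dots> \<le> z" using assms by (simp add: algebra_simps)
  finally show "y - inf y x \<le> z" .
qed

section \<open>The order dual and the modulus of a functional\<close>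

lemma blinfun_apply_eq_prts:
  "blinfun_apply (f::'a::banach_lattice \<Rightarrow>\<^sub>L real) x = f (pprt x) - f (- nprt x)"
  by (metis prts blinfun.add_right blinfun.minus_right diff_minus_eq_add)

lemma dual_le_antisym:
  assumes "dual_le f g" "dual_le g (f::'a::banach_lattice \<Rightarrow>\<^sub>L real)" shows "f = g"
proof (rule blinfun_eqI)
  fix x :: 'a
  have "0 \<le> - nprt x" by simp
  then show "f x = g x"
    using assms unfolding dual_le_def by (metis blinfun_apply_eq_prts zero_le_pprt order_antisym)
qed

lemma dual_nonneg_apply: "dual_le 0 g \<Longrightarrow> 0 \<le> x \<Longrightarrow> 0 \<le> blinfun_apply g x"
  by (simp add: dual_le_def)

lemma dual_nonneg_mono: "dual_le 0 g \<Longrightarrow> x \<le> y \<Longrightarrow> blinfun_apply g x \<le> g y"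
  using dual_nonneg_apply[of g "y - x"] by (simp add: blinfun.diff_right)

lemma dual_le_scaleR_nonneg: "dual_le 0 g \<Longrightarrow> 0 \<le> c \<Longrightarrow> dual_le 0 (c *\<^sub>R g)"
  by (simp add: dual_le_def scaleR_blinfun.rep_eq)

definition is_modulus :: "('a::banach_lattice \<Rightarrow>\<^sub>L real) \<Rightarrow> ('a \<Rightarrow>\<^sub>L real) \<Rightarrow> bool" where
  "is_modulus f h \<longleftrightarrow> dual_le f h \<and> dual_le (- f) h \<and>
                       (\<forall>k. dual_le f k \<and> dual_le (- f) k \<longrightarrow> dual_le h k)"

lemma dual_abs_eqI: "is_modulus f h \<Longrightarrow> dual_abs f = h"
  unfolding dual_abs_def is_modulus_def[symmetric]
  by (rule the_equality) (auto simp: is_modulus_def intro: dual_le_antisym)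

lemma dual_abs_of_nonneg: "dual_le 0 g \<Longrightarrow> dual_abs g = g"
proof (rule dual_abs_eqI)
  assume "dual_le 0 g"
  then have "- g x \<le> g x" if "0 \<le> x" for x
    using dual_nonneg_apply[OF _ that] by fastforce
  then show "is_modulus g g" by (simp add: is_modulus_def dual_le_def uminus_blinfun.rep_eq)
qed

definition cone_extension :: "('a::banach_lattice \<Rightarrow> real) \<Rightarrow> 'a \<Rightarrow> real" where
  "cone_extension m x = m (pprt x) - m (- nprt x)"

context
  fixes m :: "'a::banach_lattice \<Rightarrow> real"
  assumes add: "\<And>x y. 0 \<le> x \<Longrightarrow> 0 \<le> y \<Longrightarrow> m (x + y) = m x + m y"
    and scale: "\<And>c x. 0 \<le> c \<Longrightarrow> 0 \<le> x \<Longrightarrow> m (c *\<^sub>R x) = c * m x"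
begin

lemma cone_extension_diff: "0 \<le> a \<Longrightarrow> 0 \<le> b \<Longrightarrow> cone_extension m (a - b) = m a - m b"
proof -
  assume "0 \<le> a" "0 \<le> b"
  moreover have "pprt (a - b) + b = a + - nprt (a - b)"
    using prts[of "a - b"] by (simp add: algebra_simps)
  ultimately have "m (pprt (a - b)) + m b = m a + m (- nprt (a - b))"
    using add by (metis neg_0_le_iff_le nprt_le_zero zero_le_pprt)
  then show ?thesis by (simp add: cone_extension_def)
qed

lemma cone_extension_eq: "0 \<le> x \<Longrightarrow> cone_extension m x = m x"
  using cone_extension_diff[of x 0] scale[of 0 0] by simp

lemma cone_extension_add: "cone_extension m (x + y) = cone_extension m x + cone_extension m y"
proof -
  have "x + y = (pprt x + pprt y) - (- nprt x + - nprt y)"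
    by (metis add_diff_add diff_minus_eq_add prts)
  then have "cone_extension m (x + y) = m (pprt x + pprt y) - m (- nprt x + - nprt y)"
    by (simp only: cone_extension_diff add_nonneg_nonneg zero_le_pprt neg_0_le_iff_le nprt_le_zero)
  then show ?thesis
    using add[of "pprt x" "pprt y"] add[of "- nprt x" "- nprt y"] by (simp add: cone_extension_def)
qed

lemma cone_extension_scaleR: "cone_extension m (r *\<^sub>R x) = r * cone_extension m x"
proof -
  have nonneg: "cone_extension m (c *\<^sub>R x) = c * cone_extension m x" if "0 \<le> c" for c x
  proof -
    have "c *\<^sub>R x = c *\<^sub>R (pprt x + nprt x)" by (simp only: prts[symmetric])
    also have "\<dots> = c *\<^sub>R pprt x - c *\<^sub>R (- nprt x)" by (simp add: algebra_simps)
    finally have "cone_extension m (c *\<^sub>R x) = m (c *\<^sub>R pprt x) - m (c *\<^sub>R (- nprt x))"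
      using that by (simp only: cone_extension_diff scaleR_nonneg_nonneg zero_le_pprt neg_0_le_iff_le nprt_le_zero)
    then show ?thesis
      using that scale[of c "pprt x"] scale[of c "- nprt x"] by (simp add: cone_extension_def algebra_simps)
  qed
  have "- x = - (pprt x + nprt x)" by (simp only: prts[symmetric])
  also have "\<dots> = (- nprt x) - pprt x" by (simp add: algebra_simps)
  finally have "cone_extension m (- x) = - cone_extension m x"
    by (simp only: cone_extension_diff zero_le_pprt neg_0_le_iff_le nprt_le_zero) (simp add: cone_extension_def)
  then show ?thesis
    using nonneg[of r x] nonneg[of "- r" "- x"] by (cases "0 \<le> r") auto
qed

lemma cone_extension_bounded_linear:
  assumes bound: "\<And>x. 0 \<le> x \<Longrightarrow> \<bar>m x\<bar> \<le> C * norm x"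
  shows "bounded_linear (cone_extension m)"
proof (rule bounded_linear_intro)
  fix x :: 'a
  have "\<bar>cone_extension m x\<bar> \<le> max C 0 * norm (pprt x) + max C 0 * norm (- nprt x)"
    using bound[of "pprt x"] bound[of "- nprt x"]
      mult_right_mono[OF max.cobounded1[of C 0], of "norm (pprt x)"]
      mult_right_mono[OF max.cobounded1[of C 0], of "norm (- nprt x)"]
    by (simp add: cone_extension_def)
  also have "\<dots> \<le> max C 0 * norm x + max C 0 * norm x"
    by (intro add_mono mult_left_mono) (simp_all add: norm_pprt_le norm_nprt_le)
  finally show "norm (cone_extension m x) \<le> norm x * (2 * max C 0)" by simp
qed (simp_all add: cone_extension_add cone_extension_scaleR)

lemma cone_additive_extends_to_blinfun:
  assumes "\<And>x. 0 \<le> x \<Longrightarrow> \<bar>m x\<bar> \<le> C * norm x"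
  obtains h :: "'a \<Rightarrow>\<^sub>L real" where "\<And>x. 0 \<le> x \<Longrightarrow> h x = m x"
  using that[of "Blinfun (cone_extension m)"]
  by (simp add: bounded_linear_Blinfun_apply[OF cone_extension_bounded_linear[OF assms]] cone_extension_eq)

end

text \<open>On the positive cone, \<open>pos_sup f\<close> is the Riesz--Kantorovich formula for \<open>f\<^sup>+\<close>.\<close>

definition pos_sup :: "('a::banach_lattice \<Rightarrow>\<^sub>L real) \<Rightarrow> 'a \<Rightarrow> real" where
  "pos_sup f x = (SUP y\<in>{y. 0 \<le> y \<and> y \<le> x}. f y)"

lemma blinfun_le_norm_of_interval:
  "0 \<le> y \<Longrightarrow> y \<le> x \<Longrightarrow> blinfun_apply f (y::'a::banach_lattice) \<le> norm f * norm x"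
  by (metis abs_le_D1 norm_blinfun norm_mono_nonneg mult_left_mono norm_ge_zero order_trans real_norm_def)

lemma pos_sup_upper: "0 \<le> y \<Longrightarrow> y \<le> x \<Longrightarrow> blinfun_apply f y \<le> pos_sup f x"
  unfolding pos_sup_def
  by (rule cSUP_upper) (auto intro!: bdd_aboveI2 blinfun_le_norm_of_interval)

lemma pos_sup_least:
  "0 \<le> x \<Longrightarrow> (\<And>y. 0 \<le> y \<Longrightarrow> y \<le> x \<Longrightarrow> blinfun_apply f y \<le> c) \<Longrightarrow> pos_sup f x \<le> c"
  unfolding pos_sup_def by (rule cSUP_least) force+

lemma pos_sup_nonneg: "0 \<le> x \<Longrightarrow> 0 \<le> pos_sup f x"
  using pos_sup_upper[of 0 x f] by simp

lemma pos_sup_ge: "0 \<le> x \<Longrightarrow> blinfun_apply f x \<le> pos_sup f x"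
  by (simp add: pos_sup_upper)

lemma pos_sup_le_norm: "0 \<le> x \<Longrightarrow> pos_sup f x \<le> norm f * norm x"
  by (rule pos_sup_least) (auto intro: blinfun_le_norm_of_interval)

lemma pos_sup_add:
  assumes x: "0 \<le> x" and z: "0 \<le> z" shows "pos_sup f (x + z) = pos_sup f x + pos_sup f z"
proof (rule antisym)
  show "pos_sup f (x + z) \<le> pos_sup f x + pos_sup f z"
  proof (rule pos_sup_least)
    fix y assume "0 \<le> y" "y \<le> x + z"
    then obtain y1 y2 where "y = y1 + y2" "0 \<le> y1" "y1 \<le> x" "0 \<le> y2" "y2 \<le> z"
      using riesz_decomposition[OF x z] by blast
    then show "f y \<le> pos_sup f x + pos_sup f z"
      by (simp add: blinfun.add_right add_mono pos_sup_upper)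
  qed (use x z in simp)
  have "pos_sup f x \<le> pos_sup f (x + z) - pos_sup f z"
  proof (rule pos_sup_least[OF x])
    fix y1 assume y1: "0 \<le> y1" "y1 \<le> x"
    have "pos_sup f z \<le> pos_sup f (x + z) - f y1"
    proof (rule pos_sup_least[OF z])
      fix y2 assume "0 \<le> y2" "y2 \<le> z"
      then have "f (y1 + y2) \<le> pos_sup f (x + z)"
        using y1 by (intro pos_sup_upper add_nonneg_nonneg add_mono)
      then show "f y2 \<le> pos_sup f (x + z) - f y1"
        by (simp add: blinfun.add_right)
    qed
    then show "f y1 \<le> pos_sup f (x + z) - pos_sup f z" by simp
  qed
  then show "pos_sup f x + pos_sup f z \<le> pos_sup f (x + z)" by simp
qed

lemma pos_sup_scaleR_le:
  assumes c: "0 < c" and x: "0 \<le> x" shows "pos_sup f (c *\<^sub>R x) \<le> c * pos_sup f x"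
proof (rule pos_sup_least)
  show "0 \<le> c *\<^sub>R x" using c x by (intro scaleR_nonneg_nonneg) auto
  fix y assume y: "0 \<le> y" "y \<le> c *\<^sub>R x"
  have "(1/c) *\<^sub>R y \<le> (1/c) *\<^sub>R (c *\<^sub>R x)"
    using c y by (intro scaleR_left_mono) auto
  then have "f ((1/c) *\<^sub>R y) \<le> pos_sup f x"
    using c y by (intro pos_sup_upper scaleR_nonneg_nonneg) auto
  then show "f y \<le> c * pos_sup f x"
    using c by (simp add: blinfun.scaleR_right field_simps)
qed

lemma pos_sup_scaleR:
  assumes c: "0 \<le> c" and x: "0 \<le> x" shows "pos_sup f (c *\<^sub>R x) = c * pos_sup f x"
proof (cases "c = 0")
  case True
  have "pos_sup f 0 \<le> 0"
    by (rule pos_sup_least) (auto dest: antisym)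
  then show ?thesis
    using True pos_sup_nonneg[of 0 f] by simp
next
  case False
  with c have c: "0 < c" by simp
  have "pos_sup f x = pos_sup f ((1/c) *\<^sub>R (c *\<^sub>R x))" using c by simp
  also have "\<dots> \<le> (1/c) * pos_sup f (c *\<^sub>R x)"
    using c x by (intro pos_sup_scaleR_le scaleR_nonneg_nonneg) auto
  finally have "c * pos_sup f x \<le> pos_sup f (c *\<^sub>R x)" using c by (simp add: field_simps)
  then show ?thesis using pos_sup_scaleR_le[OF c x, where f=f] by simp
qed

lemma dual_abs_apply:
  fixes f :: "'a::banach_lattice \<Rightarrow>\<^sub>L real"
  assumes "0 \<le> x" shows "dual_abs f x = 2 * pos_sup f x - f x"
proof -
  let ?m = "\<lambda>x. 2 * pos_sup f x - f x"
  obtain h :: "'a \<Rightarrow>\<^sub>L real" where h: "\<And>x. 0 \<le> x \<Longrightarrow> h x = ?m x"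
  proof (rule cone_additive_extends_to_blinfun[of ?m "3 * norm f"])
    show "?m (x + y) = ?m x + ?m y" if "0 \<le> x" "0 \<le> y" for x y
      using that by (simp add: pos_sup_add blinfun.add_right)
    show "?m (c *\<^sub>R x) = c * ?m x" if "0 \<le> c" "0 \<le> x" for c x
      using that by (simp add: pos_sup_scaleR blinfun.scaleR_right algebra_simps)
    show "\<bar>?m x\<bar> \<le> 3 * norm f * norm x" if "0 \<le> x" for x
      using that pos_sup_ge[OF that, of f] pos_sup_le_norm[OF that, of f] norm_blinfun[of f x]
      by (simp add: abs_le_iff)
  qed blast
  have "is_modulus f h"
    unfolding is_modulus_def
  proof (intro conjI allI impI)
    show "dual_le f h" "dual_le (- f) h"
      unfolding dual_le_def using pos_sup_ge pos_sup_nonneg by (auto simp: h uminus_blinfun.rep_eq)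
    fix k assume k: "dual_le f k \<and> dual_le (- f) k"
    show "dual_le h k" unfolding dual_le_def
    proof (intro allI impI)
      fix x :: 'a assume x: "0 \<le> x"
      have "pos_sup f x \<le> (k x + f x) / 2"
      proof (rule pos_sup_least[OF x])
        fix y assume "0 \<le> y" "y \<le> x"
        then have "f y \<le> k y" "- f (x - y) \<le> k (x - y)"
          using k unfolding dual_le_def by (auto simp: uminus_blinfun.rep_eq)
        then show "f y \<le> (k x + f x) / 2"
          by (simp add: blinfun.diff_right)
      qed
      then show "h x \<le> k x" using x by (simp add: h)
    qed
  qed
  then show ?thesis using h[OF assms] by (simp add: dual_abs_eqI)
qed

lemma dual_abs_ge:
  assumes "0 \<le> x"
  shows "blinfun_apply f x \<le> dual_abs f x" "- f x \<le> dual_abs f x" "0 \<le> dual_abs f x"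
  using pos_sup_ge[OF assms, of f] pos_sup_nonneg[OF assms, of f] by (simp_all add: dual_abs_apply[OF assms])

lemma dual_abs_nonneg: "dual_le 0 (dual_abs f)"
  by (simp add: dual_le_def dual_abs_ge(3))

lemma dual_abs_idem: "dual_abs (dual_abs f) = dual_abs f"
  by (rule dual_abs_of_nonneg[OF dual_abs_nonneg])

lemma abs_blinfun_le_dual_abs: "\<bar>blinfun_apply f y\<bar> \<le> dual_abs f (labs y)"
proof -
  have p: "0 \<le> pprt y" and n: "0 \<le> - nprt y" by auto
  have "dual_abs f (labs y) = dual_abs f (pprt y) + dual_abs f (- nprt y)"
    by (simp add: labs_eq_pprt_minus_nprt blinfun.diff_right blinfun.minus_right)
  then show ?thesis
    using dual_abs_ge[OF p, of f] dual_abs_ge[OF n, of f] blinfun_apply_eq_prts[of f y]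
    by (simp add: abs_le_iff)
qed

text \<open>For \<open>0 \<le> y \<le> x\<close> the vector \<open>z = 2y - x\<close> satisfies \<open>labs z \<le> x\<close> and
  \<open>f z = 2 f y - f x\<close>; choosing \<open>f y\<close> close to \<open>pos_sup f x\<close> approximates \<open>dual_abs f x\<close>.\<close>

lemma dual_abs_approx:
  assumes x: "0 \<le> x" and e: "0 < e"
  obtains z where "labs z \<le> x" "dual_abs f x - e < f z"
proof -
  have "\<exists>y. 0 \<le> y \<and> y \<le> x \<and> pos_sup f x - e/2 < f y"
  proof (rule ccontr)
    assume "\<not> ?thesis"
    then have "pos_sup f x \<le> pos_sup f x - e/2"
      by (intro pos_sup_least[OF x]) (auto simp: not_less)
    then show False using e by simp
  qed
  then obtain y where y: "0 \<le> y" "y \<le> x" "pos_sup f x - e/2 < f y" by blast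
  have "y + y \<le> x + x" "x \<le> x + (y + y)" using y by (simp_all add: add_mono)
  then have "labs (y - (x - y)) \<le> x"
    by (intro labs_leI) (simp_all add: algebra_simps)
  moreover have "f (y - (x - y)) = 2 * f y - f x"
    by (simp add: blinfun.diff_right)
  ultimately show ?thesis
    using that[of "y - (x - y)"] y by (simp add: dual_abs_apply[OF x])
qed

section \<open>Weakly summable sequences of functionals\<close>

definition weak_sum :: "real \<Rightarrow> (nat \<Rightarrow> ('a::banach_lattice \<Rightarrow>\<^sub>L real)) \<Rightarrow> 'a \<Rightarrow> real" where
  "weak_sum r G x = (\<Sum>n. (dual_abs (G n) x) powr r)"

lemma lw_norm_eq_SUP_weak_sum:
  "lw_norm r G = (SUP x\<in>{x. 0 \<le> x \<and> norm x \<le> 1}. weak_sum r G x powr (1/r))"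
  by (simp add: lw_norm_def weak_sum_def)

lemma in_lw_summable:
  "in_lw r G \<Longrightarrow> 0 \<le> x \<Longrightarrow> summable (\<lambda>n. (dual_abs (G n) x) powr r)"
  by (simp add: in_lw_def)

lemma weak_sum_nonneg: "in_lw r G \<Longrightarrow> 0 \<le> x \<Longrightarrow> 0 \<le> weak_sum r G x"
  unfolding weak_sum_def by (rule suminf_nonneg) (auto simp: in_lw_summable)

lemma weak_sum_zero [simp]: "weak_sum r G 0 = 0"
  by (simp add: weak_sum_def)

lemma sum_le_weak_sum:
  "in_lw r G \<Longrightarrow> 0 \<le> x \<Longrightarrow> finite A \<Longrightarrow> (\<Sum>n\<in>A. (dual_abs (G n) x) powr r) \<le> weak_sum r G x"
  unfolding weak_sum_def by (rule sum_le_suminf) (auto simp: in_lw_summable)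

lemma weak_sum_scaleR:
  assumes "in_lw r G" "0 \<le> c" "0 \<le> x"
  shows "weak_sum r G (c *\<^sub>R x) = c powr r * weak_sum r G x"
  unfolding weak_sum_def using assms
  by (simp add: blinfun.scaleR_right powr_mult suminf_mult in_lw_summable)

lemma in_lw_dual_abs: "in_lw r (\<lambda>n. dual_abs (F n)) \<longleftrightarrow> in_lw r F"
  by (simp add: in_lw_def dual_abs_idem)

lemma dual_nonneg_le_suminf:
  fixes u :: "nat \<Rightarrow> 'a::banach_lattice"
  assumes g: "dual_le 0 g" and u: "\<And>k. 0 \<le> u k" "summable u"
  shows "blinfun_apply g (u k) \<le> g (labs (suminf u))"
proof -
  have "(\<lambda>j. g (u j)) sums g (suminf u)"
    by (rule bounded_linear.sums[OF blinfun.bounded_linear_right summable_sums[OF u(2)]])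
  then have "g (u k) \<le> g (suminf u)"
    using sum_le_suminf[of "\<lambda>j. g (u j)" "{k}"] dual_nonneg_apply[OF g u(1)]
    by (simp add: sums_iff)
  also have "\<dots> \<le> g (labs (suminf u))"
    by (rule dual_nonneg_mono[OF g le_labs(1)])
  finally show ?thesis .
qed

text \<open>Gliding hump: if the weak sums were unbounded on the positive unit ball, pick \<open>x\<^sub>k\<close>
  there with \<open>weak_sum (2\<^sup>-\<^sup>k x\<^sub>k) > k\<close>; every \<open>2\<^sup>-\<^sup>k x\<^sub>k\<close> is dominated, on positive
  functionals, by \<open>z = labs (\<Sum>k. 2\<^sup>-\<^sup>k x\<^sub>k)\<close>, so \<open>weak_sum z\<close> would be infinite.\<close>

lemma weak_sum_bounded:
  assumes G: "in_lw r G" and r: "0 < r"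
  shows "\<exists>K. \<forall>x. 0 \<le> x \<and> norm x \<le> 1 \<longrightarrow> weak_sum r G x \<le> K"
proof (rule ccontr)
  define c :: "nat \<Rightarrow> real" where "c k = (1/2)^k" for k
  assume "\<not> ?thesis"
  then have "\<forall>k::nat. \<exists>x. 0 \<le> x \<and> norm x \<le> 1 \<and> real k / (c k powr r) < weak_sum r G x"
    by (meson not_le)
  then obtain xk where xk: "\<And>k. 0 \<le> xk k" "\<And>k. norm (xk k) \<le> 1"
    "\<And>k. real k / (c k powr r) < weak_sum r G (xk k)"
    by metis
  have summable: "summable (\<lambda>k. c k *\<^sub>R xk k)"
  proof (rule summable_comparison_test'[where g=c and N=0])
    show "summable c" unfolding c_def by (rule summable_geometric) simp
    show "norm (c k *\<^sub>R xk k) \<le> c k" for k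
      using xk(2)[of k] by (simp add: c_def mult_left_le)
  qed
  define z where "z = labs (\<Sum>k. c k *\<^sub>R xk k)"
  have z: "0 \<le> z" unfolding z_def by (rule labs_nonneg)
  have "real k < weak_sum r G z" for k
  proof -
    have "real k < c k powr r * weak_sum r G (xk k)"
      using xk(3)[of k] by (simp add: c_def divide_less_eq mult.commute)
    also have "\<dots> = weak_sum r G (c k *\<^sub>R xk k)"
      by (simp add: weak_sum_scaleR[OF G _ xk(1)] c_def)
    also have "\<dots> \<le> weak_sum r G z"
      unfolding weak_sum_def
    proof (rule suminf_le)
      show "(dual_abs (G n) (c k *\<^sub>R xk k)) powr r \<le> (dual_abs (G n) z) powr r" for n
        using r xk(1) summable unfolding z_def
        by (intro powr_mono2 dual_abs_ge(3) dual_nonneg_le_suminf dual_abs_nonneg)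
          (auto simp: c_def scaleR_nonneg_nonneg less_imp_le)
      show "summable (\<lambda>n. (dual_abs (G n) (c k *\<^sub>R xk k)) powr r)"
        using xk(1) by (intro in_lw_summable[OF G]) (simp add: c_def scaleR_nonneg_nonneg)
      show "summable (\<lambda>n. (dual_abs (G n) z) powr r)"
        by (rule in_lw_summable[OF G z])
    qed
    finally show ?thesis .
  qed
  then show False
    using reals_Archimedean2[of "weak_sum r G z"] by (meson not_less_iff_gr_or_eq order.strict_trans)
qed

lemma lw_norm_bdd:
  assumes G: "in_lw r G" and r: "0 < r"
  shows "bdd_above ((\<lambda>x. weak_sum r G x powr (1/r)) ` {x. 0 \<le> x \<and> norm x \<le> 1})"
proof -
  obtain K where K: "\<And>x. 0 \<le> x \<Longrightarrow> norm x \<le> 1 \<Longrightarrow> weak_sum r G x \<le> K"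
    using weak_sum_bounded[OF G r] by blast
  show ?thesis
    by (rule bdd_aboveI2[where M="K powr (1/r)"])
      (use K r weak_sum_nonneg[OF G] in \<open>auto intro!: powr_mono2\<close>)
qed

lemma weak_sum_powr_le_lw_norm:
  "in_lw r G \<Longrightarrow> 0 < r \<Longrightarrow> 0 \<le> x \<Longrightarrow> norm x \<le> 1 \<Longrightarrow> weak_sum r G x powr (1/r) \<le> lw_norm r G"
  unfolding lw_norm_eq_SUP_weak_sum by (rule cSUP_upper[OF _ lw_norm_bdd]) auto

lemma lw_norm_nonneg: "in_lw r G \<Longrightarrow> 0 < r \<Longrightarrow> 0 \<le> lw_norm r G"
  using weak_sum_powr_le_lw_norm[of r G 0] by simp

lemma lw_norm_least:
  "(\<And>x. 0 \<le> x \<Longrightarrow> norm x \<le> 1 \<Longrightarrow> weak_sum r G x powr (1/r) \<le> c) \<Longrightarrow> lw_norm r G \<le> c"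
  unfolding lw_norm_eq_SUP_weak_sum by (rule cSUP_least) auto

lemma weak_sum_le_lw_norm:
  assumes G: "in_lw r G" and r: "0 < r" and x: "0 \<le> x"
  shows "weak_sum r G x \<le> (lw_norm r G * norm x) powr r"
proof (cases "x = 0")
  case False
  define x' where "x' = (1 / norm x) *\<^sub>R x"
  have x': "0 \<le> x'" "norm x' \<le> 1" using x False by (simp_all add: x'_def scaleR_nonneg_nonneg)
  have "weak_sum r G x' = (weak_sum r G x' powr (1/r)) powr r"
    using weak_sum_nonneg[OF G x'(1)] r by (simp add: powr_powr)
  also have "\<dots> \<le> lw_norm r G powr r"
    using weak_sum_powr_le_lw_norm[OF G r x'] r by (intro powr_mono2) auto
  finally have "norm x powr r * weak_sum r G x' \<le> norm x powr r * lw_norm r G powr r"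
    by (simp add: mult_left_mono)
  moreover have "x = norm x *\<^sub>R x'" using False by (simp add: x'_def)
  ultimately show ?thesis
    using weak_sum_scaleR[OF G norm_ge_zero x'(1), of "norm x"] lw_norm_nonneg[OF G r]
    by (simp add: powr_mult mult.commute)
qed simp

definition lw_pos_ball :: "real \<Rightarrow> (nat \<Rightarrow> ('a::banach_lattice \<Rightarrow>\<^sub>L real)) set" where
  "lw_pos_ball r = {G. in_lw r G \<and> pos_seq G \<and> lw_norm r G \<le> 1}"

lemma lw_pos_ballD:
  assumes "G \<in> lw_pos_ball r"
  shows "in_lw r G" "dual_abs (G n) = G n" "0 \<le> x \<Longrightarrow> 0 \<le> G n x"
  using assms by (auto simp: lw_pos_ball_def pos_seq_def dual_abs_of_nonneg dual_le_def)

lemma lw_pos_ball_weak_sum_le: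
  assumes G: "G \<in> lw_pos_ball r" and r: "0 < r" and x: "0 \<le> x"
  shows "weak_sum r G x \<le> norm x powr r"
proof -
  have "weak_sum r G x \<le> (lw_norm r G * norm x) powr r"
    by (rule weak_sum_le_lw_norm[OF lw_pos_ballD(1)[OF G] r x])
  also have "\<dots> \<le> norm x powr r"
    using G r lw_norm_nonneg[OF lw_pos_ballD(1)[OF G] r]
    by (intro powr_mono2) (auto simp: lw_pos_ball_def mult_left_le_one_le)
  finally show ?thesis .
qed

lemma lw_pos_ball_apply_le_norm:
  assumes G: "G \<in> lw_pos_ball r" and r: "0 < r" and x: "0 \<le> x"
  shows "blinfun_apply (G n) x \<le> norm x"
proof -
  have "G n x powr r \<le> weak_sum r G x"
    using sum_le_weak_sum[OF lw_pos_ballD(1)[OF G] x, of "{n}"] lw_pos_ballD(2)[OF G] by simp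
  also have "\<dots> \<le> norm x powr r" by (rule lw_pos_ball_weak_sum_le[OF G r x])
  finally show ?thesis
    using r by (meson norm_ge_zero not_le powr_less_mono2)
qed

lemma zero_in_lw_pos_ball:
  assumes "0 < r" shows "(\<lambda>n. 0 :: 'a::banach_lattice \<Rightarrow>\<^sub>L real) \<in> lw_pos_ball r"
proof -
  have "dual_abs (0::'a \<Rightarrow>\<^sub>L real) = 0"
    by (rule dual_abs_of_nonneg) (simp add: dual_le_def)
  with assms show ?thesis
    by (auto simp: lw_pos_ball_def in_lw_def pos_seq_def dual_le_def weak_sum_def
        intro: lw_norm_least)
qed

lemma scaled_modulus_in_lw_pos_ball:
  assumes F: "in_lw r F" and r: "0 < r" and c: "0 < c" "lw_norm r F \<le> c"
  shows "(\<lambda>n. (1/c) *\<^sub>R dual_abs (F n)) \<in> lw_pos_ball r"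
proof -
  let ?G = "\<lambda>n. (1/c) *\<^sub>R dual_abs (F n)"
  have pos: "dual_le 0 (?G n)" for n
    using c by (intro dual_le_scaleR_nonneg dual_abs_nonneg) auto
  have scaled: "(dual_abs (?G n) x) powr r = (1/c) powr r * (dual_abs (F n) x) powr r" if "0 \<le> x" for n x
    using c dual_abs_ge(3)[OF that, of "F n"]
    by (simp add: dual_abs_of_nonneg[OF pos] scaleR_blinfun.rep_eq powr_divide)
  have G: "in_lw r ?G"
    using F by (simp add: in_lw_def scaled summable_mult)
  have "lw_norm r ?G \<le> 1"
  proof (rule lw_norm_least)
    fix x :: 'a assume x: "0 \<le> x" "norm x \<le> 1"
    have "weak_sum r ?G x = (1/c) powr r * weak_sum r F x"
      unfolding weak_sum_def scaled[OF x(1)] using in_lw_summable[OF F x(1)] by (rule suminf_mult)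
    then have "weak_sum r ?G x powr (1/r) = (1/c) * weak_sum r F x powr (1/r)"
      using c r weak_sum_nonneg[OF F x(1)] by (simp add: powr_mult powr_powr)
    also have "\<dots> \<le> (1/c) * lw_norm r F"
      using c by (intro mult_left_mono weak_sum_powr_le_lw_norm[OF F r x]) auto
    also have "\<dots> \<le> 1" using c by (simp add: field_simps)
    finally show "weak_sum r ?G x powr (1/r) \<le> 1" .
  qed
  with G pos show ?thesis by (simp add: lw_pos_ball_def pos_seq_def)
qed

section \<open>Positive strongly summable sequences\<close>

definition trunc_seq :: "nat \<Rightarrow> (nat \<Rightarrow> 'a::zero) \<Rightarrow> nat \<Rightarrow> 'a" where
  "trunc_seq N xs n = (if n < N then xs n else 0)"

definition tail_seq :: "nat \<Rightarrow> (nat \<Rightarrow> 'a::zero) \<Rightarrow> nat \<Rightarrow> 'a" where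
  "tail_seq N xs n = (if n < N then 0 else xs n)"

definition single_seq :: "nat \<Rightarrow> 'a::zero \<Rightarrow> nat \<Rightarrow> 'a" where
  "single_seq n y k = (if k = n then y else 0)"

lemma trunc_plus_tail_seq: "(\<lambda>n. trunc_seq N xs n + tail_seq N xs n) = (xs :: nat \<Rightarrow> 'a::monoid_add)"
  by (auto simp: trunc_seq_def tail_seq_def)

lemma canon_trunc_seq: "canon F (trunc_seq N xs) = (\<Sum>n<N. blinfun_apply (F n) (xs n))"
  unfolding canon_def trunc_seq_def by (subst suminf_finite[of "{..<N}"]) auto

lemma canon_single_seq: "canon F (single_seq n y) = blinfun_apply (F n) y"
  unfolding canon_def single_seq_def by (subst suminf_finite[of "{n}"]) auto

lemma in_lpi_finite_support: "(\<And>n. N \<le> n \<Longrightarrow> xs n = 0) \<Longrightarrow> in_lpi r xs"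
  unfolding in_lpi_def
  by (intro allI impI summable_finite[of "{..<N}"]) (auto simp: not_less)

lemma in_lpi_trunc_seq: "in_lpi r (trunc_seq N xs)"
  by (rule in_lpi_finite_support[of N]) (simp add: trunc_seq_def)

lemma in_lpi_single_seq: "in_lpi r (single_seq n y)"
  by (rule in_lpi_finite_support[of "Suc n"]) (simp add: single_seq_def)

lemma in_lpi_tail_seq: "in_lpi r xs \<Longrightarrow> in_lpi r (tail_seq N xs)"
  unfolding in_lpi_def
proof (intro allI impI)
  fix F :: "nat \<Rightarrow> 'a \<Rightarrow>\<^sub>L real"
  assume "\<forall>F. in_lw r F \<and> pos_seq F \<longrightarrow> summable (\<lambda>n. \<bar>F n (labs (xs n))\<bar>)"
    and "in_lw r F \<and> pos_seq F"
  then have "summable (\<lambda>n. \<bar>F n (labs (xs n))\<bar>)" by blast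
  then show "summable (\<lambda>n. \<bar>F n (labs (tail_seq N xs n))\<bar>)"
    by (rule summable_comparison_test'[where N=0]) (simp add: tail_seq_def)
qed

lemma lpi_norm_eq_SUP:
  "lpi_norm r xs = (SUP G\<in>lw_pos_ball r. \<Sum>n. blinfun_apply (G n) (labs (xs n)))"
  by (simp add: lpi_norm_def lw_pos_ball_def)

lemma lw_pos_ball_pairing_summable:
  assumes "in_lpi r xs" "G \<in> lw_pos_ball r"
  shows "summable (\<lambda>n. blinfun_apply (G n) (labs (xs n)))"
proof -
  have "summable (\<lambda>n. \<bar>G n (labs (xs n))\<bar>)"
    using assms unfolding in_lpi_def lw_pos_ball_def by blast
  then show ?thesis
    using lw_pos_ballD(3)[OF assms(2) labs_nonneg] by (simp add: abs_of_nonneg)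
qed

lemma tail_pairing_antimono:
  assumes xs: "in_lpi r xs" and G: "G \<in> lw_pos_ball r" and "N \<le> N'"
  shows "(\<Sum>n. G n (labs (tail_seq N' xs n))) \<le> (\<Sum>n. G n (labs (tail_seq N xs n)))"
  using assms lw_pos_ballD(3)[OF G labs_nonneg]
  by (intro suminf_le lw_pos_ball_pairing_summable in_lpi_tail_seq) (auto simp: tail_seq_def)

lemma suminf_tail_gt_imp_block:
  fixes u :: "nat \<Rightarrow> real"
  assumes "summable u" and "e < (\<Sum>n. if n < N then 0 else u n)"
  obtains M where "N < M" "e < (\<Sum>n\<in>{N..<M}. u n)"
proof -
  let ?t = "\<lambda>n. if n < N then 0 else u n"
  have "eventually (\<lambda>n. ?t n = u n) sequentially"
    using eventually_ge_at_top[of N] by eventually_elim auto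
  then have "summable ?t"
    using assms(1) by (simp add: summable_cong)
  then have "eventually (\<lambda>M. e < (\<Sum>n<M. ?t n)) sequentially"
    using assms(2) by (intro order_tendstoD(1)[OF summable_LIMSEQ])
  then have "eventually (\<lambda>M. N < M \<and> e < (\<Sum>n<M. ?t n)) sequentially"
    using eventually_gt_at_top[of N] by eventually_elim auto
  then obtain M where M: "N < M" "e < (\<Sum>n<M. ?t n)"
    by (auto simp: eventually_sequentially)
  have "(\<Sum>n<M. ?t n) = (\<Sum>n\<in>{N..<M}. u n)"
    using M(1) by (simp add: lessThan_atLeast0 sum.atLeastLessThan_concat[symmetric, of 0 N M] )
  with M that show ?thesis by simp
qed

lemma strict_mono_block:
  fixes Nk :: "nat \<Rightarrow> nat"
  assumes "strict_mono Nk" "Nk 0 = 0"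
  shows "\<exists>!k. Nk k \<le> n \<and> n < Nk (Suc k)"
proof -
  define k where "k = (LEAST k. n < Nk (Suc k))"
  have "n < Nk (Suc n)"
    using strict_mono_imp_increasing[OF assms(1), of "Suc n"] by simp
  then have k: "n < Nk (Suc k)" "\<And>j. n < Nk (Suc j) \<Longrightarrow> k \<le> j"
    unfolding k_def by (auto intro: LeastI Least_le)
  have "Nk k \<le> n"
  proof (cases k)
    case (Suc j)
    then show ?thesis using k(2)[of j] by fastforce
  qed (simp add: assms(2))
  moreover have "j = k" if j: "Nk j \<le> n" "n < Nk (Suc j)" for j
  proof -
    have "Nk (Suc k) \<le> Nk j \<longleftrightarrow> Suc k \<le> j" by (rule strict_mono_less_eq[OF assms(1)])
    then have "\<not> Suc k \<le> j" using j(1) k(1) by linarith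
    with k(2)[OF j(2)] show ?thesis by simp
  qed
  ultimately show ?thesis using k(1) by blast
qed

lemma sum_lessThan_blocks:
  fixes Nk :: "nat \<Rightarrow> nat"
  assumes "mono Nk" "Nk 0 = 0"
  shows "(\<Sum>n<Nk K. f n) = (\<Sum>k<K. \<Sum>n\<in>{Nk k..<Nk (Suc k)}. f n)"
proof (induction K)
  case (Suc K)
  have "(\<Sum>n<Nk (Suc K). f n) = (\<Sum>n<Nk K. f n) + (\<Sum>n\<in>{Nk K..<Nk (Suc K)}. f n)"
    using monoD[OF assms(1), of K "Suc K"]
    by (simp add: lessThan_atLeast0 sum.atLeastLessThan_concat)
  with Suc show ?case by simp
qed (simp add: assms(2))

lemma exists_strict_mono_blocks:
  assumes "\<And>N. \<exists>M>N. P N M"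
  obtains Nk :: "nat \<Rightarrow> nat" where "strict_mono Nk" "Nk 0 = 0" "\<And>k. P (Nk k) (Nk (Suc k))"
proof -
  obtain nxt where nxt: "\<And>N. N < nxt N" "\<And>N. P N (nxt N)" using assms by metis
  define Nk where "Nk = rec_nat 0 (\<lambda>_. nxt)"
  have "Nk (Suc k) = nxt (Nk k)" for k by (simp add: Nk_def)
  then show ?thesis
    using that[of Nk] nxt by (simp add: Nk_def strict_mono_Suc_iff)
qed

definition glue_blocks ::
    "(nat \<Rightarrow> nat) \<Rightarrow> (nat \<Rightarrow> real) \<Rightarrow> (nat \<Rightarrow> nat \<Rightarrow> ('a::banach_lattice \<Rightarrow>\<^sub>L real)) \<Rightarrow> nat \<Rightarrow> ('a \<Rightarrow>\<^sub>L real)"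
  where "glue_blocks Nk a H n = (let k = THE k. Nk k \<le> n \<and> n < Nk (Suc k) in a k *\<^sub>R H k n)"

lemma glue_blocks_eq:
  assumes "strict_mono Nk" "Nk 0 = 0" "Nk k \<le> n" "n < Nk (Suc k)"
  shows "glue_blocks Nk a H n = a k *\<^sub>R H k n"
proof -
  have "(THE k. Nk k \<le> n \<and> n < Nk (Suc k)) = k"
    using strict_mono_block[OF assms(1,2)] assms(3,4) by (blast intro: the1_equality)
  then show ?thesis by (simp add: glue_blocks_def)
qed

context
  fixes r :: real and Nk :: "nat \<Rightarrow> nat" and a :: "nat \<Rightarrow> real"
    and H :: "nat \<Rightarrow> nat \<Rightarrow> ('a::banach_lattice \<Rightarrow>\<^sub>L real)"
  assumes r: "0 < r" and Nk: "strict_mono Nk" "Nk 0 = 0"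
    and H: "\<And>k. H k \<in> lw_pos_ball r" and a: "\<And>k. 0 \<le> a k"
begin

lemma glue_blocks_nonneg: "dual_le 0 (glue_blocks Nk a H n)"
proof -
  obtain k where "Nk k \<le> n" "n < Nk (Suc k)" using strict_mono_block[OF Nk, of n] by blast
  then show ?thesis
    using H[of k] a[of k]
    by (auto simp: glue_blocks_eq[OF Nk] lw_pos_ball_def pos_seq_def intro: dual_le_scaleR_nonneg)
qed

lemma sum_glue_blocks:
  "(\<Sum>n<Nk K. u (glue_blocks Nk a H n) n) = (\<Sum>k<K. \<Sum>n\<in>{Nk k..<Nk (Suc k)}. u (a k *\<^sub>R H k n) n)"
  unfolding sum_lessThan_blocks[OF strict_mono_mono[OF Nk(1)] Nk(2)]
  by (intro sum.cong) (auto simp: glue_blocks_eq[OF Nk])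

lemma glue_blocks_in_lw:
  assumes "summable (\<lambda>k. a k powr r)"
  shows "in_lw r (glue_blocks Nk a H)"
  unfolding in_lw_def
proof (intro allI impI)
  fix x :: 'a assume x: "0 \<le> x"
  let ?t = "\<lambda>n. (dual_abs (glue_blocks Nk a H n) x) powr r"
  show "summable ?t"
  proof (rule summableI_nonneg_bounded[where x="(\<Sum>k. a k powr r) * norm x powr r"])
    fix M
    have block: "(\<Sum>n\<in>{Nk k..<Nk (Suc k)}. (a k *\<^sub>R H k n) x powr r) \<le> a k powr r * norm x powr r" for k
    proof -
      have "(\<Sum>n\<in>{Nk k..<Nk (Suc k)}. (a k *\<^sub>R H k n) x powr r)
          = a k powr r * (\<Sum>n\<in>{Nk k..<Nk (Suc k)}. (dual_abs (H k n) x) powr r)"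
        using a[of k] lw_pos_ballD(3)[OF H x]
        by (simp add: lw_pos_ballD(2)[OF H] scaleR_blinfun.rep_eq powr_mult sum_distrib_left)
      also have "\<dots> \<le> a k powr r * weak_sum r (H k) x"
        by (intro mult_left_mono sum_le_weak_sum[OF lw_pos_ballD(1)[OF H] x]) auto
      also have "\<dots> \<le> a k powr r * norm x powr r"
        by (intro mult_left_mono lw_pos_ball_weak_sum_le[OF H r x]) auto
      finally show ?thesis .
    qed
    have "(\<Sum>n<M. ?t n) \<le> (\<Sum>n<Nk M. ?t n)"
      using strict_mono_imp_increasing[OF Nk(1), of M] by (intro sum_mono2) auto
    also have "\<dots> = (\<Sum>k<M. \<Sum>n\<in>{Nk k..<Nk (Suc k)}. (a k *\<^sub>R H k n) x powr r)"
      by (simp add: dual_abs_of_nonneg[OF glue_blocks_nonneg] sum_glue_blocks[where u="\<lambda>g n. g x powr r"])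
    also have "\<dots> \<le> (\<Sum>k<M. a k powr r) * norm x powr r"
      by (simp add: sum_distrib_right sum_mono block)
    also have "\<dots> \<le> (\<Sum>k. a k powr r) * norm x powr r"
      by (intro mult_right_mono sum_le_suminf assms) auto
    finally show "(\<Sum>n<M. ?t n) \<le> (\<Sum>k. a k powr r) * norm x powr r" .
  qed simp
qed

lemma glue_blocks_pairing_ge:
  assumes "\<And>k. e \<le> (\<Sum>n\<in>{Nk k..<Nk (Suc k)}. H k n (labs (xs n)))"
  shows "e * (\<Sum>k<K. a k) \<le> (\<Sum>n<Nk K. glue_blocks Nk a H n (labs (xs n)))"
proof -
  have "e * (\<Sum>k<K. a k) = (\<Sum>k<K. a k * e)" by (simp add: sum_distrib_left mult.commute)
  also have "\<dots> \<le> (\<Sum>k<K. a k * (\<Sum>n\<in>{Nk k..<Nk (Suc k)}. H k n (labs (xs n))))"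
    using assms a by (intro sum_mono mult_left_mono) auto
  also have "\<dots> = (\<Sum>n<Nk K. glue_blocks Nk a H n (labs (xs n)))"
    by (simp add: sum_glue_blocks[where u="\<lambda>g n. g (labs (xs n))"] scaleR_blinfun.rep_eq sum_distrib_left)
  finally show ?thesis .
qed

end

lemma tail_pairing_eq:
  fixes xs :: "nat \<Rightarrow> 'a::banach_lattice"
  shows "blinfun_apply (G n) (labs (tail_seq N xs n)) = (if n < N then 0 else G n (labs (xs n)))"
  by (simp add: tail_seq_def)

text \<open>Gliding hump: otherwise there are blocks \<open>[N\<^sub>k, N\<^sub>k\<^sub>+\<^sub>1)\<close> and \<open>H\<^sub>k\<close> in the unit ball
  whose pairing with \<open>xs\<close> over block \<open>k\<close> exceeds \<open>e\<close>. Gluing the \<open>H\<^sub>k / (k + 1)\<close> gives a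
  sequence satisfying \<open>in_lw r\<close> (as \<open>r > 1\<close>) whose pairing with \<open>xs\<close> dominates the harmonic
  series.\<close>

lemma lpi_uniform_tail_at:
  assumes r: "1 < r" and xs: "in_lpi r xs" and e: "0 < e"
  shows "\<exists>N. \<forall>G\<in>lw_pos_ball r. (\<Sum>n. G n (labs (tail_seq N xs n))) \<le> e"
proof (rule ccontr)
  assume "\<not> ?thesis"
  then obtain H where H: "\<And>N. H N \<in> lw_pos_ball r" "\<And>N. e < (\<Sum>n. H N n (labs (tail_seq N xs n)))"
    by (metis not_le)
  have "\<exists>M>N. e < (\<Sum>n\<in>{N..<M}. H N n (labs (xs n)))" for N
    using H(2)[of N] lw_pos_ball_pairing_summable[OF xs H(1)]
    by (auto simp: tail_pairing_eq elim: suminf_tail_gt_imp_block)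
  then obtain Nk where Nk: "strict_mono Nk" "Nk 0 = 0"
    and blocks: "\<And>k. e < (\<Sum>n\<in>{Nk k..<Nk (Suc k)}. H (Nk k) n (labs (xs n)))"
    by (rule exists_strict_mono_blocks) blast
  define a :: "nat \<Rightarrow> real" where "a k = inverse (real (Suc k))" for k
  define G where "G = glue_blocks Nk a (\<lambda>k. H (Nk k))"
  have "0 < r" "\<And>k. H (Nk k) \<in> lw_pos_ball r" "\<And>k. 0 \<le> a k"
    using r H(1) by (simp_all add: a_def)
  note glue = this(1) Nk this(2,3)
  have "summable (\<lambda>n. real n powr - r)" using r by (simp add: summable_real_powr_iff)
  then have "summable (\<lambda>k. a k powr r)"
    by (subst (asm) summable_Suc_iff[symmetric]) (simp add: a_def powr_minus inverse_powr)
  then have "in_lw r G" unfolding G_def by (rule glue_blocks_in_lw[OF glue])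
  moreover have "pos_seq G" using glue_blocks_nonneg[OF glue] by (simp add: pos_seq_def G_def)
  ultimately have "summable (\<lambda>n. \<bar>G n (labs (xs n))\<bar>)" using xs by (simp add: in_lpi_def)
  have "summable a"
  proof (rule summableI_nonneg_bounded)
    fix K
    have "e * (\<Sum>k<K. a k) \<le> (\<Sum>n<Nk K. G n (labs (xs n)))"
      unfolding G_def using blocks by (intro glue_blocks_pairing_ge[OF glue] less_imp_le)
    also have "\<dots> \<le> (\<Sum>n. \<bar>G n (labs (xs n))\<bar>)"
      using \<open>summable (\<lambda>n. \<bar>G n (labs (xs n))\<bar>)\<close>
      by (intro order_trans[OF sum_mono sum_le_suminf]) auto
    finally show "(\<Sum>k<K. a k) \<le> (\<Sum>n. \<bar>G n (labs (xs n))\<bar>) / e"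
      using e by (simp add: field_simps)
  qed (simp add: a_def)
  then show False
    using not_summable_harmonic[where 'a=real] summable_Suc_iff[of "\<lambda>n. inverse (real n)"] by (simp add: a_def[abs_def])
qed

lemma lpi_uniform_tail:
  assumes r: "1 < r" and xs: "in_lpi r xs" and e: "0 < e"
  shows "\<exists>N0. \<forall>N\<ge>N0. \<forall>G\<in>lw_pos_ball r. (\<Sum>n. G n (labs (tail_seq N xs n))) \<le> e"
  using lpi_uniform_tail_at[OF assms] tail_pairing_antimono[OF xs] by (meson order_trans)

lemma lpi_norm_bdd:
  fixes xs :: "nat \<Rightarrow> 'a::banach_lattice"
  assumes r: "1 < r" and xs: "in_lpi r xs"
  shows "bdd_above ((\<lambda>G. \<Sum>n. blinfun_apply (G n) (labs (xs n))) ` lw_pos_ball r)"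
proof -
  obtain N where N: "\<And>G. G \<in> lw_pos_ball r \<Longrightarrow> (\<Sum>n. G n (labs (tail_seq N xs n))) \<le> 1"
    using lpi_uniform_tail_at[OF r xs, of 1] by auto
  show ?thesis
  proof (rule bdd_aboveI2)
    fix G :: "nat \<Rightarrow> 'a \<Rightarrow>\<^sub>L real" assume G: "G \<in> lw_pos_ball r"
    have split: "G n (labs (xs n)) = G n (labs (trunc_seq N xs n)) + G n (labs (tail_seq N xs n))" for n
      by (simp add: trunc_seq_def tail_seq_def)
    have "(\<Sum>n. G n (labs (xs n)))
        = (\<Sum>n. G n (labs (trunc_seq N xs n))) + (\<Sum>n. G n (labs (tail_seq N xs n)))"
      unfolding split using G xs
      by (intro suminf_add[symmetric] lw_pos_ball_pairing_summable in_lpi_trunc_seq in_lpi_tail_seq)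
    also have "(\<Sum>n. G n (labs (trunc_seq N xs n))) = (\<Sum>n<N. G n (labs (xs n)))"
      by (subst suminf_finite[of "{..<N}"]) (auto simp: trunc_seq_def)
    also have "\<dots> \<le> (\<Sum>n<N. norm (xs n))"
      using G r by (intro sum_mono) (metis lw_pos_ball_apply_le_norm labs_nonneg norm_labs zero_less_one order.strict_trans)
    finally show "(\<Sum>n. G n (labs (xs n))) \<le> (\<Sum>n<N. norm (xs n)) + 1"
      using N[OF G] by simp
  qed
qed

lemma lpi_norm_upper:
  "1 < r \<Longrightarrow> in_lpi r xs \<Longrightarrow> G \<in> lw_pos_ball r \<Longrightarrow> (\<Sum>n. G n (labs (xs n))) \<le> lpi_norm r xs"
  unfolding lpi_norm_eq_SUP by (rule cSUP_upper[OF _ lpi_norm_bdd])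

lemma lpi_norm_least:
  "0 < r \<Longrightarrow> (\<And>G. G \<in> lw_pos_ball r \<Longrightarrow> (\<Sum>n. G n (labs (xs n))) \<le> c) \<Longrightarrow> lpi_norm r xs \<le> c"
  unfolding lpi_norm_eq_SUP by (rule cSUP_least) (auto dest: zero_in_lw_pos_ball)

lemma lpi_norm_nonneg: "1 < r \<Longrightarrow> in_lpi r xs \<Longrightarrow> 0 \<le> lpi_norm r xs"
  using lpi_norm_upper[of r xs "\<lambda>n. 0"] zero_in_lw_pos_ball[of r] by simp

lemma lpi_norm_tail_le:
  assumes "1 < r" "in_lpi r xs" "0 < e"
  shows "\<exists>N0. \<forall>N\<ge>N0. lpi_norm r (tail_seq N xs) \<le> e"
proof -
  obtain N0 where N0: "\<forall>N\<ge>N0. \<forall>G\<in>lw_pos_ball r. (\<Sum>n. G n (labs (tail_seq N xs n))) \<le> e"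
    using lpi_uniform_tail[OF assms] by blast
  have "lpi_norm r (tail_seq N xs) \<le> e" if "N0 \<le> N" for N
    using N0 that assms(1) by (intro lpi_norm_least) auto
  then show ?thesis by blast
qed

lemma lpi_norm_single_seq_le: "0 < r \<Longrightarrow> lpi_norm r (single_seq n (y::'a::banach_lattice)) \<le> norm y"
proof (rule lpi_norm_least)
  fix G :: "nat \<Rightarrow> 'a \<Rightarrow>\<^sub>L real" assume "0 < r" "G \<in> lw_pos_ball r"
  then have "G n (labs y) \<le> norm y"
    using lw_pos_ball_apply_le_norm[OF _ _ labs_nonneg] by (metis norm_labs)
  then show "(\<Sum>k. G k (labs (single_seq n y k))) \<le> norm y"
    by (subst suminf_finite[of "{n}"]) (auto simp: single_seq_def)
qed

lemma modulus_pairing_summable: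
  assumes "in_lw r F" "in_lpi r xs"
  shows "summable (\<lambda>n. dual_abs (F n) (labs (xs n)))"
proof -
  have "in_lw r (\<lambda>n. dual_abs (F n))" "pos_seq (\<lambda>n. dual_abs (F n))"
    using assms(1) by (simp_all add: in_lw_dual_abs pos_seq_def dual_abs_nonneg)
  then have "summable (\<lambda>n. \<bar>dual_abs (F n) (labs (xs n))\<bar>)"
    using assms(2) unfolding in_lpi_def by blast
  then show ?thesis by (simp add: dual_abs_ge(3) labs_nonneg)
qed

lemma canon_summable_abs:
  assumes "in_lw r F" "in_lpi r xs"
  shows "summable (\<lambda>n. \<bar>blinfun_apply (F n) (xs n)\<bar>)"
  by (rule summable_rabs_comparison_test[OF _ modulus_pairing_summable[OF assms]])
    (auto intro: abs_blinfun_le_dual_abs)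

lemma canon_bound:
  assumes r: "1 < r" and F: "in_lw r F" and xs: "in_lpi r xs"
  shows "\<bar>canon F xs\<bar> \<le> lw_norm r F * lpi_norm r xs"
proof -
  define S where "S = (\<Sum>n. dual_abs (F n) (labs (xs n)))"
  define L where "L = lw_norm r F"
  define P where "P = lpi_norm r xs"
  have L: "0 \<le> L" and P: "0 \<le> P"
    using r lw_norm_nonneg[OF F] lpi_norm_nonneg[OF r xs] by (simp_all add: L_def P_def)
  have "\<bar>canon F xs\<bar> \<le> (\<Sum>n. \<bar>F n (xs n)\<bar>)"
    unfolding canon_def by (rule summable_rabs[OF canon_summable_abs[OF F xs]])
  also have "\<dots> \<le> S"
    unfolding S_def using canon_summable_abs[OF F xs] modulus_pairing_summable[OF F xs]
    by (intro suminf_le abs_blinfun_le_dual_abs)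
  finally have canon_le: "\<bar>canon F xs\<bar> \<le> S" .
  have S_le: "S \<le> c * P" if c: "L < c" for c
  proof -
    have "(\<lambda>n. (1/c) *\<^sub>R dual_abs (F n)) \<in> lw_pos_ball r"
      using r L c by (intro scaled_modulus_in_lw_pos_ball[OF F]) (auto simp: L_def)
    then have "(\<Sum>n. ((1/c) *\<^sub>R dual_abs (F n)) (labs (xs n))) \<le> P"
      unfolding P_def by (rule lpi_norm_upper[OF r xs])
    then show ?thesis
      using L c modulus_pairing_summable[OF F xs]
      by (simp add: S_def scaleR_blinfun.rep_eq suminf_divide field_simps)
  qed
  have "S \<le> L * P"
  proof (cases "P = 0")
    case True
    then show ?thesis using S_le[of "L + 1"] by simp
  next
    case False
    with P have P_pos: "0 < P" by simp
    have "S / P \<le> L"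
    proof (rule dense_ge)
      fix c assume "L < c"
      then show "S / P \<le> c" using S_le[of c] P_pos by (simp add: pos_divide_le_eq)
    qed
    then show ?thesis using P_pos by (simp add: pos_divide_le_eq)
  qed
  with canon_le show ?thesis by (simp add: L_def P_def)
qed

lemma canon_injective:
  assumes "\<forall>xs. in_lpi r xs \<longrightarrow> canon F xs = canon G xs"
  shows "F = G"
proof (intro ext blinfun_eqI)
  fix n y
  have "canon F (single_seq n y) = canon G (single_seq n y)"
    using assms in_lpi_single_seq by blast
  then show "F n y = G n y" by (simp add: canon_single_seq)
qed

lemma canon_mono_iff:
  assumes F: "in_lw r F" and G: "in_lw r G"
  shows "(\<forall>n. dual_le (F n) (G n)) \<longleftrightarrow> lpi_dual_le r (canon F) (canon G)"
proof
  assume "\<forall>n. dual_le (F n) (G n)"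
  then show "lpi_dual_le r (canon F) (canon G)"
    unfolding lpi_dual_le_def canon_def dual_le_def
    using summable_rabs_cancel[OF canon_summable_abs[OF F]] summable_rabs_cancel[OF canon_summable_abs[OF G]]
    by (auto intro!: suminf_le)
next
  assume le: "lpi_dual_le r (canon F) (canon G)"
  show "\<forall>n. dual_le (F n) (G n)"
    unfolding dual_le_def
  proof (intro allI impI)
    fix n and x :: 'a assume "0 \<le> x"
    then have "\<forall>k. 0 \<le> single_seq n x k" by (simp add: single_seq_def)
    then have "canon F (single_seq n x) \<le> canon G (single_seq n x)"
      using le in_lpi_single_seq unfolding lpi_dual_le_def by blast
    then show "F n x \<le> G n x" by (simp add: canon_single_seq)
  qed
qed

section \<open>The duality\<close>

lemma canon_summable: "in_lw r F \<Longrightarrow> in_lpi r xs \<Longrightarrow> summable (\<lambda>n. blinfun_apply (F n) (xs n))"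
  by (rule summable_rabs_cancel[OF canon_summable_abs])

lemma lpi_dual_add:
  "lpi_dual r \<phi> \<Longrightarrow> in_lpi r x \<Longrightarrow> in_lpi r y \<Longrightarrow> \<phi> (\<lambda>n. x n + y n) = \<phi> x + \<phi> y"
  by (simp add: lpi_dual_def linear_on_set_def)

lemma lpi_dual_scaleR: "lpi_dual r \<phi> \<Longrightarrow> in_lpi r x \<Longrightarrow> \<phi> (\<lambda>n. c *\<^sub>R x n) = c * \<phi> x"
  by (simp add: lpi_dual_def linear_on_set_def)

lemma lpi_dual_bound:
  assumes "1 < r" "lpi_dual r \<phi>"
  obtains C where "0 \<le> C" "\<And>xs. in_lpi r xs \<Longrightarrow> \<bar>\<phi> xs\<bar> \<le> C * lpi_norm r xs"
proof -
  obtain C where C: "\<And>xs. in_lpi r xs \<Longrightarrow> \<bar>\<phi> xs\<bar> \<le> C * lpi_norm r xs"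
    using assms(2) unfolding lpi_dual_def by blast
  have "C * lpi_norm r xs \<le> max C 0 * lpi_norm r xs" if "in_lpi r xs" for xs
    using lpi_norm_nonneg[OF assms(1) that] by (intro mult_right_mono) auto
  with C show ?thesis using that[of "max C 0"] by force
qed

lemma lpi_dual_trunc_seq:
  assumes "lpi_dual r \<phi>"
  shows "\<phi> (trunc_seq N xs) = (\<Sum>n<N. \<phi> (single_seq n (xs n)))"
proof (induction N)
  case 0
  have "\<phi> (trunc_seq 0 xs) = \<phi> (\<lambda>n. 0 *\<^sub>R trunc_seq 0 xs n)" by (simp add: trunc_seq_def[abs_def])
  also have "\<dots> = 0 * \<phi> (trunc_seq 0 xs)" by (rule lpi_dual_scaleR[OF assms in_lpi_trunc_seq])
  finally show ?case by simp
next
  case (Suc N)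
  have "trunc_seq (Suc N) xs = (\<lambda>n. trunc_seq N xs n + single_seq N (xs N) n)"
    by (auto simp: trunc_seq_def single_seq_def)
  then show ?case
    using Suc lpi_dual_add[OF assms in_lpi_trunc_seq in_lpi_single_seq] by simp
qed

lemma lpi_dual_sums:
  assumes r: "1 < r" and \<phi>: "lpi_dual r \<phi>" and xs: "in_lpi r xs"
  shows "(\<lambda>n. \<phi> (single_seq n (xs n))) sums \<phi> xs"
  unfolding sums_def
proof (rule LIMSEQ_I)
  fix e :: real assume e: "0 < e"
  obtain C where C: "0 \<le> C" "\<And>xs. in_lpi r xs \<Longrightarrow> \<bar>\<phi> xs\<bar> \<le> C * lpi_norm r xs"
    using lpi_dual_bound[OF r \<phi>] by blast
  obtain N0 where N0: "\<And>N. N0 \<le> N \<Longrightarrow> lpi_norm r (tail_seq N xs) \<le> e / (C + 1)"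
    using lpi_norm_tail_le[OF r xs, of "e / (C + 1)"] e C(1) by auto
  have "norm ((\<Sum>n<N. \<phi> (single_seq n (xs n))) - \<phi> xs) < e" if "N0 \<le> N" for N
  proof -
    have "\<phi> xs = \<phi> (trunc_seq N xs) + \<phi> (tail_seq N xs)"
      using lpi_dual_add[OF \<phi> in_lpi_trunc_seq[of r N xs] in_lpi_tail_seq[OF xs, of N]]
      by (simp add: trunc_plus_tail_seq)
    then have "norm ((\<Sum>n<N. \<phi> (single_seq n (xs n))) - \<phi> xs) = \<bar>\<phi> (tail_seq N xs)\<bar>"
      by (simp add: lpi_dual_trunc_seq[OF \<phi>])
    also have "\<dots> \<le> C * (e / (C + 1))"
      using C N0[OF that] in_lpi_tail_seq[OF xs] by (meson mult_left_mono order_trans)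
    also have "\<dots> < e" using C(1) e by (simp add: field_simps)
    finally show ?thesis .
  qed
  then show "\<exists>N0. \<forall>N\<ge>N0. norm ((\<Sum>n<N. \<phi> (single_seq n (xs n))) - \<phi> xs) < e" by blast
qed

locale conjugate_exponents =
  fixes p q :: real
  assumes p_gt_1: "1 < p" and conjugate: "1 / p + 1 / q = 1"
begin

lemma q_gt_1: "1 < q"
proof -
  have "1 / q = 1 - 1 / p" using conjugate by simp
  moreover have "0 < 1 / p" "1 / p < 1" using p_gt_1 by simp_all
  ultimately have "0 < 1 / q" "1 / q < 1" by simp_all
  then show ?thesis by (simp add: divide_less_eq zero_less_divide_iff)
qed

lemma p_pos: "0 < p" and q_pos: "0 < q"
  using p_gt_1 q_gt_1 by simp_all

lemma normalized_holder_sum: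
  assumes "\<And>n. 0 \<le> a n" "\<And>n. 0 \<le> b n" "(\<Sum>n\<in>A. a n powr p) \<le> 1" "(\<Sum>n\<in>A. b n powr q) \<le> 1"
  shows "(\<Sum>n\<in>A. a n * b n) \<le> 1"
proof -
  have "(\<Sum>n\<in>A. a n * b n) \<le> (\<Sum>n\<in>A. a n powr p / p + b n powr q / q)"
    by (intro sum_mono Youngs_inequality p_gt_1 q_gt_1 conjugate assms)
  also have "\<dots> = (\<Sum>n\<in>A. a n powr p) / p + (\<Sum>n\<in>A. b n powr q) / q"
    by (simp add: sum.distrib sum_divide_distrib)
  also have "\<dots> \<le> 1 / p + 1 / q"
    using assms(3,4) p_pos q_pos by (intro add_mono divide_right_mono) auto
  finally show ?thesis using conjugate by simp
qed

text \<open>The equality case of Hoelder's inequality: \<open>a = b\<^sup>q\<^sup>-\<^sup>1 / T\<^sup>1\<^sup>/\<^sup>p\<close> with \<open>T = \<Sum> b\<^sup>q\<close>.\<close>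

lemma holder_extremal:
  assumes b: "\<And>n. 0 \<le> b n"
  obtains a where "\<And>n. 0 \<le> a n" "(\<Sum>n\<in>A. a n powr p) \<le> 1"
    "(\<Sum>n\<in>A. a n * b n) = (\<Sum>n\<in>A. b n powr q) powr (1/q)"
proof (cases "(\<Sum>n\<in>A. b n powr q) = 0")
  case True
  then show ?thesis using that[of "\<lambda>_. 0"] by simp
next
  case False
  define T where "T = (\<Sum>n\<in>A. b n powr q)"
  have T: "0 < T" using False by (simp add: T_def sum_nonneg order_less_le)
  define a where "a n = b n powr (q - 1) / T powr (1/p)" for n
  have "(q - 1) * p = q"
    using conjugate p_pos q_pos by (simp add: field_simps)
  then have "a n powr p = b n powr q / T" for n
    using T p_pos by (simp add: a_def powr_divide powr_powr)
  then have "(\<Sum>n\<in>A. a n powr p) = 1"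
    using T by (simp add: sum_divide_distrib[symmetric] T_def)
  moreover have "a n * b n = b n powr q / T powr (1/p)" for n
    using powr_mult_base[OF b[of n], of "q - 1"] by (simp add: a_def mult.commute)
  then have "(\<Sum>n\<in>A. a n * b n) = T powr (1 - 1/p)"
    using T by (simp add: sum_divide_distrib[symmetric] T_def powr_diff)
  moreover have "1 - 1/p = 1/q" using conjugate by simp
  ultimately show ?thesis using that[of a] by (simp add: a_def T_def)
qed

lemma lpi_norm_test_seq_le:
  assumes x: "0 \<le> x" "norm x \<le> 1" and a: "\<And>n. 0 \<le> a n" "(\<Sum>n<N. a n powr p) \<le> 1"
    and y: "\<And>n. n < N \<Longrightarrow> labs (y n) \<le> x"
  shows "lpi_norm q (trunc_seq N (\<lambda>n. a n *\<^sub>R y n)) \<le> 1"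
proof (rule lpi_norm_least[OF q_pos])
  fix G :: "nat \<Rightarrow> 'a \<Rightarrow>\<^sub>L real" assume G: "G \<in> lw_pos_ball q"
  have "(\<Sum>n. G n (labs (trunc_seq N (\<lambda>n. a n *\<^sub>R y n) n))) = (\<Sum>n<N. a n * G n (labs (y n)))"
    by (subst suminf_finite[of "{..<N}"])
      (auto simp: trunc_seq_def labs_scaleR blinfun.scaleR_right a(1) intro!: sum.cong)
  also have "\<dots> \<le> (\<Sum>n<N. a n * G n x)"
    using G y a(1) by (intro sum_mono mult_left_mono dual_nonneg_mono) (auto simp: lw_pos_ball_def pos_seq_def)
  also have "\<dots> \<le> 1"
  proof (rule normalized_holder_sum[OF a(1) _ a(2)])
    show "0 \<le> G n x" for n by (rule lw_pos_ballD(3)[OF G x(1)])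
    have "(\<Sum>n<N. G n x powr q) \<le> weak_sum q G x"
      using sum_le_weak_sum[OF lw_pos_ballD(1)[OF G] x(1)] by (simp add: lw_pos_ballD(2)[OF G])
    also have "\<dots> \<le> norm x powr q" by (rule lw_pos_ball_weak_sum_le[OF G q_pos x(1)])
    also have "\<dots> \<le> 1" using x(2) q_pos by (simp add: powr_le1)
    finally show "(\<Sum>n<N. G n x powr q) \<le> 1" .
  qed
  finally show "(\<Sum>n. G n (labs (trunc_seq N (\<lambda>n. a n *\<^sub>R y n) n))) \<le> 1" .
qed

context
  fixes F :: "nat \<Rightarrow> ('a::banach_lattice \<Rightarrow>\<^sub>L real)" and D :: real
  assumes D: "0 \<le> D"
    and tests: "\<And>N xs. lpi_norm q (trunc_seq N xs) \<le> 1 \<Longrightarrow> canon F (trunc_seq N xs) \<le> D"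
begin

lemma partial_weak_sum_le_of_test_bound:
  assumes x: "0 \<le> x" "norm x \<le> 1"
  shows "(\<Sum>n<N. (dual_abs (F n) x) powr q) \<le> D powr q"
proof -
  define b where "b n = dual_abs (F n) x" for n
  have b: "0 \<le> b n" for n unfolding b_def by (rule dual_abs_ge(3)[OF x(1)])
  obtain a where a: "\<And>n. 0 \<le> a n" "(\<Sum>n<N. a n powr p) \<le> 1"
    and ab: "(\<Sum>n<N. a n * b n) = (\<Sum>n<N. b n powr q) powr (1/q)"
    by (rule holder_extremal[of b "{..<N}", OF b]) blast
  define A where "A = (\<Sum>n<N. a n)"
  have A: "0 \<le> A" unfolding A_def by (simp add: sum_nonneg a(1))
  have "(\<Sum>n<N. b n powr q) powr (1/q) \<le> D"
  proof (rule field_le_epsilon)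
    fix e :: real assume e: "0 < e"
    define eps where "eps = e / (A + 1)"
    have eps: "0 < eps" "eps * A \<le> e" using e A by (simp_all add: eps_def field_simps)
    have "\<exists>z. labs z \<le> x \<and> b n - eps < F n z" for n
      unfolding b_def by (rule dual_abs_approx[OF x(1) eps(1)]) blast
    then obtain y where y: "\<And>n. labs (y n) \<le> x" "\<And>n. b n - eps < F n (y n)"
      by metis
    have "(\<Sum>n<N. b n powr q) powr (1/q) - eps * A = (\<Sum>n<N. a n * (b n - eps))"
      by (simp add: ab[symmetric] A_def algebra_simps sum_subtractf sum_distrib_left)
    also have "\<dots> \<le> (\<Sum>n<N. a n * F n (y n))"
      by (intro sum_mono mult_left_mono less_imp_le y(2) a(1))
    also have "\<dots> = canon F (trunc_seq N (\<lambda>n. a n *\<^sub>R y n))"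
      by (simp add: canon_trunc_seq blinfun.scaleR_right)
    also have "\<dots> \<le> D"
      using x a y(1) by (intro tests lpi_norm_test_seq_le)
    finally show "(\<Sum>n<N. b n powr q) powr (1/q) \<le> D + e" using eps(2) by simp
  qed
  then have "((\<Sum>n<N. b n powr q) powr (1/q)) powr q \<le> D powr q"
    using q_pos by (intro powr_mono2) auto
  then show ?thesis
    using q_pos by (simp add: powr_powr b_def sum_nonneg)
qed

lemma lw_norm_le_of_test_bound: "in_lw q F" "lw_norm q F \<le> D"
proof -
  note partial = partial_weak_sum_le_of_test_bound
  have unit_summable: "summable (\<lambda>n. (dual_abs (F n) x) powr q)" if "0 \<le> x" "norm x \<le> 1" for x
    using partial[OF that] by (intro summableI_nonneg_bounded) auto
  have unit_le: "(\<Sum>n. (dual_abs (F n) x) powr q) \<le> D powr q" if "0 \<le> x" "norm x \<le> 1" for x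
    using partial[OF that] by (intro suminf_le_const unit_summable[OF that])
  show "in_lw q F"
    unfolding in_lw_def
  proof (intro allI impI)
    fix x :: 'a assume x: "0 \<le> x"
    show "summable (\<lambda>n. (dual_abs (F n) x) powr q)"
    proof (cases "x = 0")
      case False
      define x' where "x' = (1 / norm x) *\<^sub>R x"
      have x': "0 \<le> x'" "norm x' \<le> 1" using x False by (simp_all add: x'_def scaleR_nonneg_nonneg)
      have "(dual_abs (F n) x) powr q = norm x powr q * (dual_abs (F n) x') powr q" for n
        using False by (simp add: x'_def blinfun.scaleR_right powr_mult[symmetric] dual_abs_ge(3)[OF x])
      then show ?thesis using summable_mult[OF unit_summable[OF x'], of "norm x powr q"] by simp
    qed simp
  qed
  show "lw_norm q F \<le> D"
  proof (rule lw_norm_least)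
    fix x :: 'a assume x: "0 \<le> x" "norm x \<le> 1"
    have "weak_sum q F x powr (1/q) \<le> (D powr q) powr (1/q)"
      using unit_le[OF x] weak_sum_nonneg[OF \<open>in_lw q F\<close> x(1)] q_pos
      by (intro powr_mono2) (auto simp: weak_sum_def)
    then show "weak_sum q F x powr (1/q) \<le> D" using D q_pos by (simp add: powr_powr)
  qed
qed

end

lemma lpi_dual_canon:
  fixes F :: "nat \<Rightarrow> ('a::banach_lattice \<Rightarrow>\<^sub>L real)"
  assumes F: "in_lw q F" shows "lpi_dual q (canon F)"
  unfolding lpi_dual_def linear_on_set_def
proof (intro conjI ballI allI)
  fix x y :: "nat \<Rightarrow> 'a" assume "x \<in> {xs. in_lpi q xs}" "y \<in> {xs. in_lpi q xs}"
  then show "canon F (\<lambda>n. x n + y n) = canon F x + canon F y"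
    unfolding canon_def blinfun.add_right using canon_summable[OF F] by (simp add: suminf_add)
next
  fix x :: "nat \<Rightarrow> 'a" and c :: real assume "x \<in> {xs. in_lpi q xs}"
  then show "canon F (\<lambda>n. c *\<^sub>R x n) = c * canon F x"
    unfolding canon_def blinfun.scaleR_right using canon_summable[OF F] by (simp add: suminf_mult)
next
  show "\<exists>C. \<forall>xs. in_lpi q xs \<longrightarrow> \<bar>canon F xs\<bar> \<le> C * lpi_norm q xs"
    using canon_bound[OF q_gt_1 F] by blast
qed

lemma lpi_dual_norm_canon:
  fixes F :: "nat \<Rightarrow> ('a::banach_lattice \<Rightarrow>\<^sub>L real)"
  assumes F: "in_lw q F" shows "lpi_dual_norm q (canon F) = lw_norm q F"
proof -
  define B :: "(nat \<Rightarrow> 'a) set" where "B = {xs. in_lpi q xs \<and> lpi_norm q xs \<le> 1}"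
  have bound: "\<bar>canon F xs\<bar> \<le> lw_norm q F" if "xs \<in> B" for xs
    using that canon_bound[OF q_gt_1 F, of xs] lw_norm_nonneg[OF F q_pos]
    by (auto simp: B_def intro: order_trans mult_left_le)
  have "(\<lambda>n. 0) \<in> B"
    using lpi_norm_least[OF q_pos, of "\<lambda>n. 0::'a" 1] by (simp add: B_def in_lpi_finite_support)
  then have "B \<noteq> {}" by blast
  have D_eq: "lpi_dual_norm q (canon F) = (SUP xs\<in>B. \<bar>canon F xs\<bar>)"
    by (simp add: lpi_dual_norm_def B_def)
  have upper: "\<bar>canon F xs\<bar> \<le> lpi_dual_norm q (canon F)" if "xs \<in> B" for xs
    unfolding D_eq using bound that by (intro cSUP_upper bdd_aboveI2) auto
  have "lpi_dual_norm q (canon F) \<le> lw_norm q F"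
    unfolding D_eq using \<open>B \<noteq> {}\<close> bound by (rule cSUP_least)
  moreover have "lw_norm q F \<le> lpi_dual_norm q (canon F)"
  proof (rule lw_norm_le_of_test_bound(2))
    show "0 \<le> lpi_dual_norm q (canon F)"
      using upper[OF \<open>(\<lambda>n. 0) \<in> B\<close>] by simp
    show "canon F (trunc_seq N xs) \<le> lpi_dual_norm q (canon F)" if "lpi_norm q (trunc_seq N xs) \<le> 1" for N xs
      using upper[of "trunc_seq N xs"] that by (simp add: B_def in_lpi_trunc_seq)
  qed
  ultimately show ?thesis by simp
qed

lemma lpi_dual_representation:
  fixes \<phi> :: "(nat \<Rightarrow> 'a::banach_lattice) \<Rightarrow> real"
  assumes \<phi>: "lpi_dual q \<phi>"
  shows "\<exists>F. in_lw q F \<and> (\<forall>xs. in_lpi q xs \<longrightarrow> \<phi> xs = canon F xs)"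
proof -
  obtain C where C: "0 \<le> C" "\<And>xs. in_lpi q xs \<Longrightarrow> \<bar>\<phi> xs\<bar> \<le> C * lpi_norm q xs"
    using lpi_dual_bound[OF q_gt_1 \<phi>] by blast
  have bl: "bounded_linear (\<lambda>y. \<phi> (single_seq n y))" for n
  proof (rule bounded_linear_intro)
    show "\<phi> (single_seq n (y + z)) = \<phi> (single_seq n y) + \<phi> (single_seq n z)" for y z
    proof -
      have "single_seq n (y + z) = (\<lambda>k. single_seq n y k + single_seq n z k)"
        by (auto simp: single_seq_def)
      then show ?thesis using lpi_dual_add[OF \<phi> in_lpi_single_seq in_lpi_single_seq] by simp
    qed
    show "\<phi> (single_seq n (c *\<^sub>R y)) = c *\<^sub>R \<phi> (single_seq n y)" for c y
    proof -
      have "single_seq n (c *\<^sub>R y) = (\<lambda>k. c *\<^sub>R single_seq n y k)"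
        by (auto simp: single_seq_def)
      then show ?thesis using lpi_dual_scaleR[OF \<phi> in_lpi_single_seq] by simp
    qed
    show "norm (\<phi> (single_seq n y)) \<le> norm y * C" for y
    proof -
      have "\<bar>\<phi> (single_seq n y)\<bar> \<le> C * lpi_norm q (single_seq n y)"
        by (rule C(2)[OF in_lpi_single_seq])
      also have "\<dots> \<le> C * norm y"
        by (rule mult_left_mono[OF lpi_norm_single_seq_le[OF q_pos] C(1)])
      finally show ?thesis by (simp add: mult.commute)
    qed
  qed
  define F where "F n = Blinfun (\<lambda>y. \<phi> (single_seq n y))" for n
  have F: "F n y = \<phi> (single_seq n y)" for n y
    unfolding F_def by (simp add: bounded_linear_Blinfun_apply[OF bl])
  have rep: "\<phi> xs = canon F xs" if "in_lpi q xs" for xs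
    unfolding canon_def F using lpi_dual_sums[OF q_gt_1 \<phi> that] by (simp add: sums_iff)
  have "in_lw q F"
  proof (rule lw_norm_le_of_test_bound(1)[OF C(1)])
    fix N and xs :: "nat \<Rightarrow> 'a" assume "lpi_norm q (trunc_seq N xs) \<le> 1"
    then show "canon F (trunc_seq N xs) \<le> C"
      using C rep[OF in_lpi_trunc_seq] in_lpi_trunc_seq
      by (metis abs_le_D1 mult_left_le order_trans)
  qed
  with rep show ?thesis by blast
qed

end

theorem theorem1p3:
  fixes p q :: real
  assumes "1 < p" and "1 / p + 1 / q = 1"
  shows
    \<comment> \<open>well-defined: the series converges and gives an element of the dual\<close>
    "(\<forall>F::nat \<Rightarrow> ('a::banach_lattice \<Rightarrow>\<^sub>L real). in_lw q F \<longrightarrow>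
        (\<forall>xs. in_lpi q xs \<longrightarrow> summable (\<lambda>n. blinfun_apply (F n) (xs n))) \<and>
        lpi_dual q (canon F))
   \<and> \<comment> \<open>isometric\<close>
     (\<forall>F::nat \<Rightarrow> ('a \<Rightarrow>\<^sub>L real). in_lw q F \<longrightarrow> lpi_dual_norm q (canon F) = lw_norm q F)
   \<and> \<comment> \<open>injective\<close>
     (\<forall>F G::nat \<Rightarrow> ('a \<Rightarrow>\<^sub>L real). in_lw q F \<longrightarrow> in_lw q G \<longrightarrow>
        (\<forall>xs. in_lpi q xs \<longrightarrow> canon F xs = canon G xs) \<longrightarrow> F = G)
   \<and> \<comment> \<open>surjective\<close>
     (\<forall>\<phi>::(nat \<Rightarrow> 'a) \<Rightarrow> real. lpi_dual q \<phi> \<longrightarrow>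
        (\<exists>F. in_lw q F \<and> (\<forall>xs. in_lpi q xs \<longrightarrow> \<phi> xs = canon F xs)))
   \<and> \<comment> \<open>order (hence lattice) isomorphism: coordinatewise order corresponds to the dual order\<close>
     (\<forall>F G::nat \<Rightarrow> ('a \<Rightarrow>\<^sub>L real). in_lw q F \<longrightarrow> in_lw q G \<longrightarrow>
        ((\<forall>n. dual_le (F n) (G n)) \<longleftrightarrow> lpi_dual_le q (canon F) (canon G)))"
proof -
  interpret conjugate_exponents p q using assms by unfold_locales
  have "\<forall>F G::nat \<Rightarrow> ('a \<Rightarrow>\<^sub>L real). in_lw q F \<longrightarrow> in_lw q G \<longrightarrow>
      (\<forall>xs. in_lpi q xs \<longrightarrow> canon F xs = canon G xs) \<longrightarrow> F = G"
    using canon_injective by blast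
  then show ?thesis
    by (simp add: canon_summable lpi_dual_canon lpi_dual_norm_canon lpi_dual_representation canon_mono_iff)
qed

end
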